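(* Let $n\ge2$, and suppose a finite string of integers $\Sigma$ is obtained from $(2,n+1,2)$ by a finite sequence of operations, each of one of the following two types: (1) $(n_1,n_2,\dots,n_{b-1},n_b)\mapsto(2,n_1,n_2,\dots,n_{b-1},n_b+1)$; (2) $(n_1,n_2,\dots,n_{b-1},n_b)\mapsto(n_1+1,n_2,\dots,n_{b-1},n_b,2)$. Then the negative fraction of $\Sigma$ equals $m^2n/(mnk+1)$ for some integers $m>k>0$ with $\gcd(m,k)=1$. Moreover, the negative fraction of either $\Sigma$ or of the reverse of $\Sigma$ equals $$[c_s,c_{s-1},\dots,c_2,c_1,1,n-1,c_1+1,c_2,\dots,c_s]^+$$ for some $s\ge1$ and some integers $c_1,\dots,c_s\ge1$. When $s=1$ this expression is to be read as $[c_1,1,n-1,c_1+1]^+$.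
   Context: For integers $b_i\ge2$, $$[b_1,\dots,b_k]^-=b_1-\cfrac{1}{b_2-\cfrac{1}{\ddots-\cfrac{1}{b_k}}}.$$ For integers $a_i\ge1$, $$[a_1,\dots,a_h]^+=a_1+\cfrac{1}{a_2+\cfrac{1}{\ddots+\cfrac{1}{a_h}}}.$$ The negative fraction of a string $(b_1,\dots,b_k)$ is $[b_1,\dots,b_k]^-$. The reverse of $(b_1,\dots,b_k)$ is $(b_k,\dots,b_1)$. *)

theory Defs
  imports Main "HOL.Rat"
begin

text \<open>Negative continued fraction [b1,...,bk]^- (evaluated in the rationals).
  The value on the empty string is an irrelevant convention.\<close>
fun neg_cf :: "int list \<Rightarrow> rat" where
  "neg_cf [] = 0"
| "neg_cf [b] = of_int b"
| "neg_cf (b # bs) = of_int b - 1 / neg_cf bs"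

fun pos_cf :: "int list \<Rightarrow> rat" where
  "pos_cf [] = 0"
| "pos_cf [a] = of_int a"
| "pos_cf (a # as) = of_int a + 1 / pos_cf as"

definition op1 :: "int list \<Rightarrow> int list" where
  "op1 xs = 2 # butlast xs @ [last xs + 1]"

definition op2 :: "int list \<Rightarrow> int list" where
  "op2 xs = (hd xs + 1) # tl xs @ [2]"

inductive reachable :: "int \<Rightarrow> int list \<Rightarrow> bool" for n :: int where
  start: "reachable n [2, n + 1, 2]"
| step1: "reachable n xs \<Longrightarrow> reachable n (op1 xs)"
| step2: "reachable n xs \<Longrightarrow> reachable n (op2 xs)"

end

theory Submission
  imports Defs
begin

(* Continued fractions are evaluated through 2x2 integer matrices
   (continuants): [b1,...,bk]^- = p/q where (p,q) is the first column of
   prod (bi,-1;1,0), and [a1,...,ah]^+ = a/c for the first column of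
   prod (ai,1;1,0).  Operation (1) multiplies the continuant matrix of a string
   on both sides by fixed matrices, operation (2) is operation (1) conjugated by
   string reversal, and reversal acts on continuant matrices by a transpose.
   This yields an invariant of all reachable strings: the continuant matrix has
   an explicit form in terms of two coprime positive integers k, j (with m = k+j),
   and there are strings ds1, ds2 with [ds1,1]^+ = m/k, [ds2,1]^+ = m/j whose
   continuant determinants are +-1, at least one being -1.  A string with
   determinant -1 then provides the palindromic positive expansion of m^2n/(mnk+1). *)

text \<open>A matrix (a,b;c,d) is stored as the quadruple (a,b,c,d).\<close>
type_synonym mat2 = "int \<times> int \<times> int \<times> int"

fun mmul :: "mat2 \<Rightarrow> mat2 \<Rightarrow> mat2" where
  "mmul (a,b,c,d) (e,f,g,h) = (a*e+b*g, a*f+b*h, c*e+d*g, c*f+d*h)"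

lemma mmul_assoc: "mmul (mmul x y) z = mmul x (mmul y z)"
  by (cases x rule: prod_cases4; cases y rule: prod_cases4; cases z rule: prod_cases4)
     (simp add: algebra_simps)

lemma mmul_id_left: "mmul (1,0,0,1) x = x"
  by (cases x rule: prod_cases4) simp

section \<open>Continuant matrices\<close>

fun neg_mat :: "int list \<Rightarrow> mat2" where
  "neg_mat [] = (1,0,0,1)"
| "neg_mat (b # bs) = mmul (b,-1,1,0) (neg_mat bs)"

fun pos_mat :: "int list \<Rightarrow> mat2" where
  "pos_mat [] = (1,0,0,1)"
| "pos_mat (a # as) = mmul (a,1,1,0) (pos_mat as)"

lemma neg_mat_append: "neg_mat (xs @ ys) = mmul (neg_mat xs) (neg_mat ys)"
  by (induction xs) (simp_all add: mmul_id_left mmul_assoc)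

lemma pos_mat_append: "pos_mat (xs @ ys) = mmul (pos_mat xs) (pos_mat ys)"
  by (induction xs) (simp_all add: mmul_id_left mmul_assoc)

text \<open>Reversal transposes the continuant matrix (for the negative fraction up to
  the sign change induced by conjugation with diag(1,-1)).\<close>
lemma neg_mat_rev: "neg_mat xs = (a,b,c,d) \<Longrightarrow> neg_mat (rev xs) = (a,-c,-b,d)"
proof (induction xs arbitrary: a b c d)
  case (Cons x xs)
  obtain a' b' c' d' where xs_mat: "neg_mat xs = (a',b',c',d')"
    by (cases "neg_mat xs" rule: prod_cases4)
  from Cons.prems xs_mat have "a = x*a' - c'" "b = x*b' - d'" "c = a'" "d = b'" by auto
  with Cons.IH[OF xs_mat] show ?case by (simp add: neg_mat_append algebra_simps)
qed simp

lemma pos_mat_rev: "pos_mat xs = (a,b,c,d) \<Longrightarrow> pos_mat (rev xs) = (a,c,b,d)"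
proof (induction xs arbitrary: a b c d)
  case (Cons x xs)
  obtain a' b' c' d' where xs_mat: "pos_mat xs = (a',b',c',d')"
    by (cases "pos_mat xs" rule: prod_cases4)
  from Cons.prems xs_mat have "a = x*a' + c'" "b = x*b' + d'" "c = a'" "d = b'" by auto
  with Cons.IH[OF xs_mat] show ?case by (simp add: pos_mat_append algebra_simps)
qed simp

lemma pos_mat_incr_head:
  "xs \<noteq> [] \<Longrightarrow> pos_mat ((hd xs + 1) # tl xs) = mmul (1,1,0,1) (pos_mat xs)"
  by (cases xs; cases "pos_mat (tl xs)" rule: prod_cases4) (auto simp: algebra_simps)

lemma neg_cf_cons: "bs \<noteq> [] \<Longrightarrow> neg_cf (b # bs) = of_int b - 1 / neg_cf bs"
  by (cases bs) auto

lemma pos_cf_cons: "bs \<noteq> [] \<Longrightarrow> pos_cf (b # bs) = of_int b + 1 / pos_cf bs"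
  by (cases bs) auto

lemma neg_cf_eq_ratio:
  assumes "xs \<noteq> []" "\<forall>x\<in>set xs. x \<ge> 2" "neg_mat xs = (p,r,q,s)"
  shows "q \<ge> 1 \<and> p > q \<and> neg_cf xs = of_int p / of_int q"
  using assms
proof (induction xs arbitrary: p r q s)
  case (Cons b bs)
  show ?case
  proof (cases "bs = []")
    case False
    obtain p' r' q' s' where bs_mat: "neg_mat bs = (p',r',q',s')"
      by (cases "neg_mat bs" rule: prod_cases4)
    have IH: "q' \<ge> 1" "p' > q'" "neg_cf bs = of_int p' / of_int q'"
      using Cons.IH[OF False _ bs_mat] Cons.prems by auto
    have "b \<ge> 2" using Cons.prems by auto
    have entries: "p = b*p' - q'" "q = p'" using Cons.prems(3) bs_mat by auto
    have "b*p' \<ge> 2*p'" using \<open>b \<ge> 2\<close> IH by (intro mult_right_mono) auto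
    then have "p > q" using entries IH by linarith
    have "neg_cf (b # bs) = of_int b - of_int q' / of_int p'"
      using IH neg_cf_cons[OF False, of b] by simp
    also have "\<dots> = (of_int b * of_int p' - of_int q') / of_int p'"
      using IH(1,2) by (simp add: field_simps)
    also have "\<dots> = of_int p / of_int q"
      unfolding entries by simp
    finally have "neg_cf (b # bs) = of_int p / of_int q" .
    with \<open>p > q\<close> show ?thesis using IH entries by auto
  qed (use Cons.prems in auto)
qed simp

lemma pos_cf_eq_ratio:
  assumes "xs \<noteq> []" "\<forall>x\<in>set xs. x \<ge> 1" "pos_mat xs = (a,b,c,d)"
  shows "c \<ge> 1 \<and> a \<ge> 1 \<and> pos_cf xs = of_int a / of_int c"
  using assms
proof (induction xs arbitrary: a b c d)
  case (Cons x bs)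
  show ?case
  proof (cases "bs = []")
    case False
    obtain a' b' c' d' where bs_mat: "pos_mat bs = (a',b',c',d')"
      by (cases "pos_mat bs" rule: prod_cases4)
    have IH: "c' \<ge> 1" "a' \<ge> 1" "pos_cf bs = of_int a' / of_int c'"
      using Cons.IH[OF False _ bs_mat] Cons.prems by auto
    have "x \<ge> 1" using Cons.prems by auto
    have entries: "a = x*a' + c'" "c = a'" using Cons.prems(3) bs_mat by auto
    have "x*a' \<ge> 0" using \<open>x \<ge> 1\<close> IH by simp
    then have "a \<ge> 1" using entries IH by linarith
    have "pos_cf (x # bs) = of_int x + of_int c' / of_int a'"
      using IH pos_cf_cons[OF False, of x] by simp
    also have "\<dots> = (of_int x * of_int a' + of_int c') / of_int a'"
      using IH(2) by (simp add: field_simps)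
    also have "\<dots> = of_int a / of_int c"
      unfolding entries by simp
    finally have "pos_cf (x # bs) = of_int a / of_int c" .
    with \<open>a \<ge> 1\<close> show ?thesis using IH entries by auto
  qed (use Cons.prems in auto)
qed simp

lemma neg_mat_op1:
  assumes "xs \<noteq> []"
  shows "neg_mat (op1 xs) = mmul (mmul (2,-1,1,0) (neg_mat xs)) (1,0,-1,1)"
proof -
  have "neg_mat xs = mmul (neg_mat (butlast xs)) (neg_mat [last xs])"
    using append_butlast_last_id[OF assms] neg_mat_append by metis
  moreover have "neg_mat [last xs + 1] = mmul (neg_mat [last xs]) (1,0,-1,1)" by simp
  ultimately show ?thesis by (simp add: op1_def neg_mat_append mmul_assoc)
qed

lemma op2_eq_rev_op1_rev: "xs \<noteq> [] \<Longrightarrow> op2 xs = rev (op1 (rev xs))"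
  by (simp add: op1_def op2_def butlast_rev last_rev)

text \<open>ds is a witness for m/k with sign e if its entries are positive and its
  continuant (a,b;c,d) satisfies a+b = m, c+d = k, ad-bc = e; equivalently
  [ds,1]^+ = m/k with continuant determinant e.\<close>
definition pos_witness :: "int list \<Rightarrow> int \<Rightarrow> int \<Rightarrow> int \<Rightarrow> bool" where
  "pos_witness ds m k e \<longleftrightarrow> ds \<noteq> [] \<and> (\<forall>x\<in>set ds. x \<ge> 1) \<and>
     (\<exists>a b c d. pos_mat ds = (a,b,c,d) \<and> a+b = m \<and> c+d = k \<and> a*d-b*c = e)"

lemma pos_witness_cons_one: "pos_witness ds m k e \<Longrightarrow> pos_witness (1 # ds) (m+k) m (-e)"
  unfolding pos_witness_def by (auto simp: algebra_simps)

lemma pos_witness_incr_head: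
  assumes "pos_witness ds m k e"
  shows "pos_witness ((hd ds + 1) # tl ds) (m+k) k e"
proof -
  have "ds \<noteq> []" and pos: "\<forall>x\<in>set ds. x \<ge> 1" using assms unfolding pos_witness_def by auto
  then have "\<forall>x\<in>set ((hd ds + 1) # tl ds). x \<ge> 1" by (cases ds) auto
  with assms pos_mat_incr_head[OF \<open>ds \<noteq> []\<close>] show ?thesis
    unfolding pos_witness_def by (auto simp: algebra_simps)
qed

lemma pos_cf_palindromic:
  assumes wit: "pos_witness ds m k (-1)" and "n \<ge> 2"
  shows "pos_cf (ds @ [1, n-1, last ds + 1] @ tl (rev ds)) = of_int (m^2*n) / of_int (m*n*k+1)"
proof -
  obtain a b c d where mat: "pos_mat ds = (a,b,c,d)" "a+b = m" "c+d = k" "a*d-b*c = -1"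
    and "ds \<noteq> []" and pos: "\<forall>x\<in>set ds. x \<ge> 1"
    using wit unfolding pos_witness_def by blast
  have "rev ds \<noteq> []" using \<open>ds \<noteq> []\<close> by simp
  have "hd (rev ds) = last ds" using \<open>ds \<noteq> []\<close> by (simp add: hd_rev)
  then have incr: "pos_mat ((last ds + 1) # tl (rev ds)) = mmul (1,1,0,1) (a,c,b,d)"
    using pos_mat_incr_head[OF \<open>rev ds \<noteq> []\<close>] pos_mat_rev[OF mat(1)] by simp
  have "ds @ [1, n-1, last ds + 1] @ tl (rev ds) = ds @ [1, n-1] @ (last ds + 1) # tl (rev ds)"
    by simp
  then have "pos_mat (ds @ [1, n-1, last ds + 1] @ tl (rev ds)) =
      mmul (a,b,c,d) (mmul (pos_mat [1, n-1]) (mmul (1,1,0,1) (a,c,b,d)))"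
    by (simp only: pos_mat_append incr mat(1))
  also have "\<dots> = (n*(a+b)^2, a*(n*c+(n+1)*d) + b*((n-1)*c+n*d),
                   n*(a+b)*(c+d) + (b*c-a*d), c*(n*c+(n+1)*d) + d*((n-1)*c+n*d))"
    by (simp add: algebra_simps power2_eq_square)
  finally have full_mat: "pos_mat (ds @ [1, n-1, last ds + 1] @ tl (rev ds)) =
      (m^2*n, a*(n*c+(n+1)*d) + b*((n-1)*c+n*d), m*n*k+1, c*(n*c+(n+1)*d) + d*((n-1)*c+n*d))"
    using mat by (simp add: algebra_simps)
  have "last ds \<ge> 1" using pos last_in_set[OF \<open>ds \<noteq> []\<close>] by blast
  then have "\<forall>x\<in>set (ds @ [1, n-1, last ds + 1] @ tl (rev ds)). x \<ge> 1"
    using pos \<open>n \<ge> 2\<close> by (auto dest: list.set_sel(2)[OF \<open>rev ds \<noteq> []\<close>])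
  from pos_cf_eq_ratio[OF _ this full_mat] show ?thesis by simp
qed

lemma palindromic_expansion_exists:
  assumes wit: "pos_witness ds m k (-1)" and "n \<ge> 2"
  shows "\<exists>cs. length cs \<ge> 1 \<and> (\<forall>c \<in> set cs. c \<ge> 1) \<and>
           pos_cf (rev cs @ [1, n - 1, hd cs + 1] @ tl cs) = of_int (m^2*n) / of_int (m*n*k+1)"
proof (intro exI[of _ "rev ds"] conjI)
  have "ds \<noteq> []" and pos: "\<forall>x\<in>set ds. x \<ge> 1" using wit unfolding pos_witness_def by auto
  then show "length (rev ds) \<ge> 1" "\<forall>c\<in>set (rev ds). c \<ge> 1"
    by (simp_all add: Suc_le_eq)
  show "pos_cf (rev (rev ds) @ [1, n - 1, hd (rev ds) + 1] @ tl (rev ds)) =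
        of_int (m^2*n) / of_int (m*n*k+1)"
    using pos_cf_palindromic[OF wit \<open>n \<ge> 2\<close>] \<open>ds \<noteq> []\<close> by (simp add: hd_rev)
qed

section \<open>The invariant of reachable strings\<close>

text \<open>The continuant matrix of a reachable string, for m = k + j.\<close>
definition sigma_mat :: "int \<Rightarrow> int \<Rightarrow> int \<Rightarrow> mat2" where
  "sigma_mat n k j = ((k+j)^2*n, -((k+j)*n*j+1), (k+j)*n*k+1, -(n*k*j+1))"

definition reach_inv :: "int \<Rightarrow> int list \<Rightarrow> bool" where
  "reach_inv n xs \<longleftrightarrow> xs \<noteq> [] \<and> (\<forall>x\<in>set xs. x \<ge> 2) \<and>
    (\<exists>k j. k > 0 \<and> j > 0 \<and> coprime k j \<and> neg_mat xs = sigma_mat n k j \<and>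
       (\<exists>ds1 ds2 e1 e2. pos_witness ds1 (k+j) k e1 \<and> pos_witness ds2 (k+j) j e2 \<and>
          e1 \<in> {1,-1} \<and> e2 \<in> {1,-1} \<and> (e1 = -1 \<or> e2 = -1)))"

lemma reach_inv_intro:
  assumes "xs \<noteq> []" "\<forall>x\<in>set xs. x \<ge> 2" "k > 0" "j > 0" "coprime k j"
    "neg_mat xs = sigma_mat n k j" "pos_witness ds1 (k+j) k e1" "pos_witness ds2 (k+j) j e2"
    "e1 \<in> {1,-1}" "e2 \<in> {1,-1}" "e1 = -1 \<or> e2 = -1"
  shows "reach_inv n xs"
  unfolding reach_inv_def using assms by blast

lemma reach_inv_start:
  assumes "n \<ge> 2"
  shows "reach_inv n [2, n+1, 2]"
proof -
  have mat: "neg_mat [2, n+1, 2] = sigma_mat n 1 1"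
    by (simp add: sigma_mat_def algebra_simps)
  have wit: "pos_witness [1] (1+1) 1 (-1)" unfolding pos_witness_def by simp
  show ?thesis by (rule reach_inv_intro[OF _ _ _ _ _ mat wit wit]) (use assms in auto)
qed

text \<open>Reversal swaps the roles of k and j.\<close>
lemma reach_inv_rev:
  assumes "reach_inv n xs"
  shows "reach_inv n (rev xs)"
proof -
  obtain k j ds1 ds2 e1 e2 where inv: "xs \<noteq> []" "\<forall>x\<in>set xs. x \<ge> 2" "k > 0" "j > 0"
    "coprime k j" "neg_mat xs = sigma_mat n k j"
    "pos_witness ds1 (k+j) k e1" "pos_witness ds2 (k+j) j e2"
    "e1 \<in> {1,-1}" "e2 \<in> {1,-1}" "e1 = -1 \<or> e2 = -1"
    using assms unfolding reach_inv_def by blast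
  have "neg_mat xs = ((k+j)^2*n, -((k+j)*n*j+1), (k+j)*n*k+1, -(n*k*j+1))"
    using inv(6) by (simp only: sigma_mat_def)
  from neg_mat_rev[OF this] have mat: "neg_mat (rev xs) = sigma_mat n j k"
    by (simp add: sigma_mat_def algebra_simps)
  have "coprime j k" using inv(5) by (simp add: coprime_commute)
  moreover have wit: "pos_witness ds2 (j+k) j e2" "pos_witness ds1 (j+k) k e1"
    using inv(7,8) by (simp_all add: add.commute)
  ultimately show ?thesis
    using inv by (intro reach_inv_intro[OF _ _ _ _ _ mat wit]) auto
qed

text \<open>Operation (1) replaces (k, j) by (k+j, j).\<close>
lemma reach_inv_op1:
  assumes "reach_inv n xs"
  shows "reach_inv n (op1 xs)"
proof -
  obtain k j ds2 e2 where inv: "xs \<noteq> []" "\<forall>x\<in>set xs. x \<ge> 2" "k > 0" "j > 0" "coprime k j"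
    "neg_mat xs = sigma_mat n k j" "pos_witness ds2 (k+j) j e2" "e2 \<in> {1,-1}"
    using assms unfolding reach_inv_def by blast
  have "last xs \<ge> 2" using last_in_set[OF inv(1)] inv(2) by blast
  then have entries: "\<forall>x\<in>set (op1 xs). x \<ge> 2"
    using inv(2) by (auto simp: op1_def dest: in_set_butlastD)
  have mat: "neg_mat (op1 xs) = sigma_mat n (k+j) j"
    using neg_mat_op1[OF inv(1)] inv(6) by (simp add: sigma_mat_def algebra_simps power2_eq_square)
  have "coprime (k+j) j" using inv(5) by (simp add: coprime_iff_gcd_eq_1)
  moreover have wit1: "pos_witness (1 # ds2) ((k+j)+j) (k+j) (-e2)"
    using pos_witness_cons_one[OF inv(7)] by (simp add: algebra_simps)
  moreover have wit2: "pos_witness ((hd ds2 + 1) # tl ds2) ((k+j)+j) j e2"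
    using pos_witness_incr_head[OF inv(7)] .
  moreover have "op1 xs \<noteq> []" by (simp add: op1_def)
  ultimately show ?thesis
    using entries inv(3,4,8) by (intro reach_inv_intro[OF _ _ _ _ _ mat wit1 wit2]) auto
qed

lemma reach_inv_op2:
  assumes "reach_inv n xs"
  shows "reach_inv n (op2 xs)"
proof -
  have "xs \<noteq> []" using assms by (simp add: reach_inv_def)
  moreover have "reach_inv n (rev (op1 (rev xs)))"
    using assms by (intro reach_inv_rev reach_inv_op1)
  ultimately show ?thesis by (simp add: op2_eq_rev_op1_rev)
qed

lemma reachable_reach_inv:
  assumes "n \<ge> 2" and "reachable n xs"
  shows "reach_inv n xs"
  using assms(2)
  by induction (auto intro: reach_inv_start[OF assms(1)] reach_inv_op1 reach_inv_op2)

theorem lemma3p2: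
  fixes n :: int and \<Sigma> :: "int list"
  assumes "n \<ge> 2" and "reachable n \<Sigma>"
  shows "(\<exists>m k :: int. m > k \<and> k > 0 \<and> gcd m k = 1 \<and>
            neg_cf \<Sigma> = of_int (m^2 * n) / of_int (m * n * k + 1))
       \<and> (\<exists>cs :: int list. length cs \<ge> 1 \<and> (\<forall>c \<in> set cs. c \<ge> 1) \<and>
            (neg_cf \<Sigma> = pos_cf (rev cs @ [1, n - 1, hd cs + 1] @ tl cs) \<or>
             neg_cf (rev \<Sigma>) = pos_cf (rev cs @ [1, n - 1, hd cs + 1] @ tl cs)))"
proof -
  obtain k j ds1 ds2 e1 e2 where inv: "\<Sigma> \<noteq> []" "\<forall>x\<in>set \<Sigma>. x \<ge> 2" "k > 0" "j > 0"
    "coprime k j" "neg_mat \<Sigma> = sigma_mat n k j"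
    "pos_witness ds1 (k+j) k e1" "pos_witness ds2 (k+j) j e2" "e1 = -1 \<or> e2 = -1"
    using reachable_reach_inv[OF assms] unfolding reach_inv_def by blast
  have val: "neg_cf \<Sigma> = of_int ((k+j)^2*n) / of_int ((k+j)*n*k+1)"
    using neg_cf_eq_ratio[OF inv(1,2)] inv(6) by (simp add: sigma_mat_def)
  have val_rev: "neg_cf (rev \<Sigma>) = of_int ((k+j)^2*n) / of_int ((k+j)*n*j+1)"
    using neg_cf_eq_ratio[of "rev \<Sigma>"] neg_mat_rev[of \<Sigma>] inv(1,2,6) by (simp add: sigma_mat_def)
  have "gcd (k+j) k = 1" using inv(5) by (simp add: coprime_iff_gcd_eq_1 gcd.commute)
  with val inv(3,4) have part1: "\<exists>m k :: int. m > k \<and> k > 0 \<and> gcd m k = 1 \<and>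
      neg_cf \<Sigma> = of_int (m^2 * n) / of_int (m * n * k + 1)"
    by (intro exI[of _ "k+j"] exI[of _ k]) auto
  from inv(9) show ?thesis
  proof
    assume "e1 = -1"
    with inv(7) have "pos_witness ds1 (k+j) k (-1)" by simp
    then show ?thesis using part1 palindromic_expansion_exists[OF _ assms(1)] val by metis
  next
    assume "e2 = -1"
    with inv(8) have "pos_witness ds2 (k+j) j (-1)" by simp
    then show ?thesis using part1 palindromic_expansion_exists[OF _ assms(1)] val_rev by metis
  qed
qed

end
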